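(* Let $\{(X_i,W_i,Y_i)\}_{i=1}^n$ be an i.i.d. sample from a randomized experiment with treatment arms $\mathcal W=\{1,\dots,K\}$, $Y_i=Y_i(W_i)$, $(Y(1),\dots,Y(K),X)$ independent of $W$, and $0<\pi_w=P(W=w)<1$. Let $n_w=\#\{i:W_i=w\}$ and suppose $n_w/n=\pi_w+o(1)$ as $n\to\infty$ for every $w\in\mathcal W$. For $y\in\mathcal Y$ define the simple estimator $\hat F^{simple}_{Y(w)}(y)=\frac{1}{n_w}\sum_{i:W_i=w}1\{Y_i\le y\}$, and the (infeasible) regression-adjusted estimator using the true conditional distribution $\gamma_y^{(w)}(x)=F_{Y(w)\mid X}(y\mid x)$: $$\tilde F_{Y(w)}(y)=\frac{1}{n_w}\sum_{i:W_i=w}\big(1\{Y_i\le y\}-\gamma_y^{(w)}(X_i)\big)+\frac1n\sum_{i=1}^n\gamma_y^{(w)}(X_i).$$ Let $\hat\theta^{simple}_y=(\hat F^{simple}_{Y(w)}(y))_{w=1}^K$ and $\tilde\theta_y=(\tilde F_{Y(w)}(y))_{w=1}^K$. Then: (a) for any $w\in\mathcal W$ and $y\in\mathcal Y$, $\mathrm{Var}(\hat F^{simple}_{Y(w)}(y))\ge\mathrm{Var}(\tilde F_{Y(w)}(y))+o(n^{-1})$, where equality holds only if $F_{Y(w)\mid X}(y\mid X)=F_{Y(w)}(y)$; (b) for any $y\in\mathcal Y$, $\mathrm{Var}(\hat\theta^{simple}_y)\succeq\mathrm{Var}(\tilde\theta_y)+o(n^{-1})$; moreover, if $\mathrm{Var}\big(F_{Y(w)\mid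 X}(y\mid X)-r\,F_{Y(w')\mid X}(y\mid X)\big)>0$ for all distinct $w,w'\in\mathcal W$ and all $r\in\mathbb R$, then the positive definite version of this ordering holds.
   Context: $1\{\cdot\}$ is the indicator function; $A\succeq B$ means $A-B$ is positive semi-definite; $F_{Y(w)}(y)=P(Y(w)\le y)$. *)

theory Defs
  imports "HOL-Probability.Probability" "HOL-Library.Landau_Symbols"
begin

definition covariance :: "'a measure \<Rightarrow> ('a \<Rightarrow> real) \<Rightarrow> ('a \<Rightarrow> real) \<Rightarrow> real" where
  "covariance M f g =
     (\<integral>\<omega>. (f \<omega> - (\<integral>\<omega>'. f \<omega>' \<partial>M)) * (g \<omega> - (\<integral>\<omega>'. g \<omega>' \<partial>M)) \<partial>M)"

definition Var :: "'a measure \<Rightarrow> ('a \<Rightarrow> real) \<Rightarrow> real" where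
  "Var M f = (\<integral>\<omega>. (f \<omega> - (\<integral>\<omega>'. f \<omega>' \<partial>M))\<^sup>2 \<partial>M)"

definition cov_matrix :: "'a measure \<Rightarrow> ('a \<Rightarrow> real ^ 'w) \<Rightarrow> real ^ 'w ^ 'w" where
  "cov_matrix M \<theta> = (\<chi> w w'. covariance M (\<lambda>\<omega>. \<theta> \<omega> $ w) (\<lambda>\<omega>. \<theta> \<omega> $ w'))"

text \<open>Positive semi-definiteness (A \<succeq> B means psd (A - B)).\<close>
definition psd :: "real ^ 'n ^ 'n \<Rightarrow> bool" where
  "psd A \<longleftrightarrow> (\<forall>v. 0 \<le> v \<bullet> (A *v v))"

text \<open>g is a version of the conditional distribution function x \<mapsto> F_{V|X}(y|x), i.e.
  g(X) is a version of E[1{V \<le> y} | X].\<close>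
definition cond_cdf_version ::
  "'a measure \<Rightarrow> 'x measure \<Rightarrow> ('a \<Rightarrow> 'x) \<Rightarrow> ('a \<Rightarrow> real) \<Rightarrow> real \<Rightarrow> ('x \<Rightarrow> real) \<Rightarrow> bool" where
  "cond_cdf_version M Sx X V y g \<longleftrightarrow>
     g \<in> borel_measurable Sx \<and> integrable M (\<lambda>\<omega>. g (X \<omega>)) \<and>
     (\<forall>A\<in>sets Sx. (\<integral>\<omega>. indicator {..y} (V \<omega>) * indicator A (X \<omega>) \<partial>M)
                  = (\<integral>\<omega>. g (X \<omega>) * indicator A (X \<omega>) \<partial>M))"

text \<open>Number of units among the first n assigned to arm w (assignment a n i of unit i).\<close>
definition n_arm :: "(nat \<Rightarrow> nat \<Rightarrow> 'w) \<Rightarrow> nat \<Rightarrow> 'w \<Rightarrow> nat" where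
  "n_arm a n w = card {i. i < n \<and> a n i = w}"

text \<open>Simple estimator; the observed outcome of unit i is Y i (a n i).\<close>
definition F_simple :: "(nat \<Rightarrow> 'w \<Rightarrow> 'a \<Rightarrow> real) \<Rightarrow> (nat \<Rightarrow> nat \<Rightarrow> 'w) \<Rightarrow> real
    \<Rightarrow> nat \<Rightarrow> 'w \<Rightarrow> 'a \<Rightarrow> real" where
  "F_simple Y a y n w \<omega> =
     (1 / real (n_arm a n w)) * (\<Sum>i | i < n \<and> a n i = w. indicator {..y} (Y i (a n i) \<omega>))"

definition F_tilde :: "(nat \<Rightarrow> 'a \<Rightarrow> 'x) \<Rightarrow> (nat \<Rightarrow> 'w \<Rightarrow> 'a \<Rightarrow> real) \<Rightarrow> (nat \<Rightarrow> nat \<Rightarrow> 'w)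
    \<Rightarrow> ('w \<Rightarrow> real \<Rightarrow> 'x \<Rightarrow> real) \<Rightarrow> real \<Rightarrow> nat \<Rightarrow> 'w \<Rightarrow> 'a \<Rightarrow> real" where
  "F_tilde X Y a \<gamma> y n w \<omega> =
     (1 / real (n_arm a n w)) *
       (\<Sum>i | i < n \<and> a n i = w. indicator {..y} (Y i (a n i) \<omega>) - \<gamma> w y (X i \<omega>))
     + (1 / real n) * (\<Sum>i<n. \<gamma> w y (X i \<omega>))"

definition theta_simple :: "(nat \<Rightarrow> 'w \<Rightarrow> 'a \<Rightarrow> real) \<Rightarrow> (nat \<Rightarrow> nat \<Rightarrow> 'w) \<Rightarrow> real
    \<Rightarrow> nat \<Rightarrow> 'a \<Rightarrow> real ^ 'w" where
  "theta_simple Y a y n \<omega> = (\<chi> w. F_simple Y a y n w \<omega>)"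

definition theta_tilde :: "(nat \<Rightarrow> 'a \<Rightarrow> 'x) \<Rightarrow> (nat \<Rightarrow> 'w \<Rightarrow> 'a \<Rightarrow> real) \<Rightarrow> (nat \<Rightarrow> nat \<Rightarrow> 'w)
    \<Rightarrow> ('w \<Rightarrow> real \<Rightarrow> 'x \<Rightarrow> real) \<Rightarrow> real \<Rightarrow> nat \<Rightarrow> 'a \<Rightarrow> real ^ 'w" where
  "theta_tilde X Y a \<gamma> y n \<omega> = (\<chi> w. F_tilde X Y a \<gamma> y n w \<omega>)"

end

theory Submission
  imports Defs
begin

text \<open>Both estimators are sums over the units with weights s_i = 1{W_i = w} / n_w. Since \<gamma> is a
  version of the conditional distribution function, the residual 1{Y(w) \<le> y} - \<gamma>_y^(w)(X) is
  uncorrelated with every bounded function of X, and independence across units removes all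
  cross terms. This yields the exact identity
  Cov(\<theta>^simple) - Cov(\<theta>~) = diag(\<Gamma>_ww / n_w) - \<Gamma> / n,
  where \<Gamma> is the covariance matrix of the \<gamma>_y^(w)(X). Replacing n_w by n \<pi>_w costs o(1/n), and
  n times the leading term, diag(\<Gamma>_ww / \<pi>_w) - \<Gamma>, is positive semi-definite by the
  Cauchy-Schwarz inequality (\<Sum>_w x_w)^2 \<le> \<Sum>_w x_w^2 / \<pi>_w. It is definite unless two of the
  \<gamma>_y^(w)(X) are almost surely affinely related.\<close>

section \<open>Covariances of bounded random variables\<close>

definition bounded_rv :: "'a measure \<Rightarrow> ('a \<Rightarrow> real) \<Rightarrow> bool" where
  "bounded_rv M f \<longleftrightarrow> f \<in> borel_measurable M \<and> (\<exists>B. \<forall>\<omega>\<in>space M. \<bar>f \<omega>\<bar> \<le> B)"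

lemma bounded_rv_const: "bounded_rv M (\<lambda>_. c)"
  unfolding bounded_rv_def by auto

lemma bounded_rv_add:
  assumes "bounded_rv M f" "bounded_rv M g"
  shows "bounded_rv M (\<lambda>\<omega>. f \<omega> + g \<omega>)"
proof -
  obtain B C where "\<forall>\<omega>\<in>space M. \<bar>f \<omega>\<bar> \<le> B" "\<forall>\<omega>\<in>space M. \<bar>g \<omega>\<bar> \<le> C"
    using assms unfolding bounded_rv_def by blast
  then have "\<forall>\<omega>\<in>space M. \<bar>f \<omega> + g \<omega>\<bar> \<le> B + C"
    by (meson abs_triangle_ineq add_mono order_trans)
  then show ?thesis
    using assms unfolding bounded_rv_def by auto
qed

lemma bounded_rv_mult:
  assumes "bounded_rv M f" "bounded_rv M g"
  shows "bounded_rv M (\<lambda>\<omega>. f \<omega> * g \<omega>)"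
proof -
  obtain B C where "\<forall>\<omega>\<in>space M. \<bar>f \<omega>\<bar> \<le> B" "\<forall>\<omega>\<in>space M. \<bar>g \<omega>\<bar> \<le> C"
    using assms unfolding bounded_rv_def by blast
  then have "\<forall>\<omega>\<in>space M. \<bar>f \<omega> * g \<omega>\<bar> \<le> B * C"
    by (auto simp: abs_mult intro!: mult_mono)
  then show ?thesis
    using assms unfolding bounded_rv_def by auto
qed

lemma bounded_rv_diff:
  assumes "bounded_rv M f" "bounded_rv M g"
  shows "bounded_rv M (\<lambda>\<omega>. f \<omega> - g \<omega>)"
  using bounded_rv_add[OF assms(1) bounded_rv_mult[OF bounded_rv_const[of M "-1"] assms(2)]]
  by simp

lemma bounded_rv_sum:
  "(\<And>i. i \<in> I \<Longrightarrow> bounded_rv M (f i)) \<Longrightarrow> bounded_rv M (\<lambda>\<omega>. \<Sum>i\<in>I. f i \<omega>)"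
  by (induction I rule: infinite_finite_induct) (auto intro: bounded_rv_const bounded_rv_add)

lemma bounded_rv_compose:
  assumes "Z \<in> measurable M S" "F \<in> borel_measurable S" "\<And>p. p \<in> space S \<Longrightarrow> \<bar>F p\<bar> \<le> B"
  shows "bounded_rv M (\<lambda>\<omega>. F (Z \<omega>))"
  unfolding bounded_rv_def using assms measurable_space[OF assms(1)] by auto

lemma Var_eq_covariance: "Var M f = covariance M f f"
  unfolding Var_def covariance_def by (simp add: power2_eq_square)

lemma covariance_commute: "covariance M f g = covariance M g f"
  unfolding covariance_def by (simp add: mult.commute)

lemma covariance_cong_AE:
  assumes "f \<in> borel_measurable M" "f' \<in> borel_measurable M"
    and "g \<in> borel_measurable M" "g' \<in> borel_measurable M"
    and "AE \<omega> in M. f \<omega> = f' \<omega>" "AE \<omega> in M. g \<omega> = g' \<omega>"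
  shows "covariance M f g = covariance M f' g'"
proof -
  have "integral\<^sup>L M f = integral\<^sup>L M f'" "integral\<^sup>L M g = integral\<^sup>L M g'"
    using assms by (auto intro: integral_cong_AE)
  then show ?thesis unfolding covariance_def
    using assms by (intro integral_cong_AE) (auto elim: AE_mp)
qed

lemma Var_cong_AE:
  "f \<in> borel_measurable M \<Longrightarrow> g \<in> borel_measurable M \<Longrightarrow> AE \<omega> in M. f \<omega> = g \<omega> \<Longrightarrow>
   Var M f = Var M g"
  unfolding Var_eq_covariance by (rule covariance_cong_AE)

lemma covariance_self_nonneg: "0 \<le> covariance M f f"
  unfolding covariance_def by (intro Bochner_Integration.integral_nonneg) auto

context prob_space
begin

lemma bounded_rv_integrable:
  assumes "bounded_rv M f"
  shows "integrable M f"
proof -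
  obtain B where "f \<in> borel_measurable M" "\<forall>\<omega>\<in>space M. \<bar>f \<omega>\<bar> \<le> B"
    using assms unfolding bounded_rv_def by blast
  then show ?thesis
    by (intro integrable_const_bound[where B = B]) auto
qed

lemma covariance_eq:
  assumes "bounded_rv M f" "bounded_rv M g"
  shows "covariance M f g = expectation (\<lambda>\<omega>. f \<omega> * g \<omega>) - expectation f * expectation g"
proof -
  let ?a = "expectation f" and ?b = "expectation g"
  have "integrable M f" "integrable M g" "integrable M (\<lambda>\<omega>. f \<omega> * g \<omega>)"
    using assms bounded_rv_mult bounded_rv_integrable by blast+
  moreover have "(\<lambda>\<omega>. (f \<omega> - ?a) * (g \<omega> - ?b))
      = (\<lambda>\<omega>. f \<omega> * g \<omega> - (?b * f \<omega> + ?a * g \<omega>) + ?a * ?b)"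
    by (auto simp: algebra_simps)
  ultimately show ?thesis
    unfolding covariance_def by (simp add: prob_space)
qed

lemma covariance_sum_sum:
  assumes "\<And>i. i \<in> I \<Longrightarrow> bounded_rv M (f i)" "\<And>j. j \<in> J \<Longrightarrow> bounded_rv M (g j)"
  shows "covariance M (\<lambda>\<omega>. \<Sum>i\<in>I. f i \<omega>) (\<lambda>\<omega>. \<Sum>j\<in>J. g j \<omega>)
       = (\<Sum>i\<in>I. \<Sum>j\<in>J. covariance M (f i) (g j))"
proof (cases "finite I \<and> finite J")
  case True
  have "expectation (\<lambda>\<omega>. (\<Sum>i\<in>I. f i \<omega>) * (\<Sum>j\<in>J. g j \<omega>))
      = (\<Sum>i\<in>I. \<Sum>j\<in>J. expectation (\<lambda>\<omega>. f i \<omega> * g j \<omega>))"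
    using assms by (simp add: sum_product bounded_rv_integrable bounded_rv_mult integrable_sum)
  moreover have "expectation (\<lambda>\<omega>. \<Sum>i\<in>I. f i \<omega>) = (\<Sum>i\<in>I. expectation (f i))"
    "expectation (\<lambda>\<omega>. \<Sum>j\<in>J. g j \<omega>) = (\<Sum>j\<in>J. expectation (g j))"
    using assms by (simp_all add: bounded_rv_integrable)
  moreover have "(\<Sum>i\<in>I. \<Sum>j\<in>J. covariance M (f i) (g j))
     = (\<Sum>i\<in>I. \<Sum>j\<in>J. expectation (\<lambda>\<omega>. f i \<omega> * g j \<omega>) - expectation (f i) * expectation (g j))"
    using assms by (intro sum.cong refl) (simp add: covariance_eq)
  ultimately show ?thesis
    using assms by (simp add: covariance_eq bounded_rv_sum sum_product sum_subtractf)
qed (auto simp: covariance_def)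

lemma covariance_linear_combination:
  assumes "bounded_rv M f" "bounded_rv M g" "bounded_rv M f'" "bounded_rv M g'"
  shows "covariance M (\<lambda>\<omega>. s * f \<omega> + t * g \<omega>) (\<lambda>\<omega>. s' * f' \<omega> + t' * g' \<omega>)
    = s * s' * covariance M f f' + s * t' * covariance M f g'
      + t * s' * covariance M g f' + t * t' * covariance M g g'"
proof -
  let ?E = expectation
  have "(\<lambda>x. (s * f x + t * g x) * (s' * f' x + t' * g' x))
      = (\<lambda>x. s * s' * (f x * f' x) + s * t' * (f x * g' x)
              + t * s' * (g x * f' x) + t * t' * (g x * g' x))"
    by (simp add: fun_eq_iff algebra_simps)
  moreover have "integrable M f" "integrable M g" "integrable M f'" "integrable M g'"
    and "integrable M (\<lambda>x. f x * f' x)" "integrable M (\<lambda>x. f x * g' x)"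
    and "integrable M (\<lambda>x. g x * f' x)" "integrable M (\<lambda>x. g x * g' x)"
    using assms bounded_rv_mult bounded_rv_integrable by blast+
  ultimately have "?E (\<lambda>x. (s * f x + t * g x) * (s' * f' x + t' * g' x))
      = s * s' * ?E (\<lambda>x. f x * f' x) + s * t' * ?E (\<lambda>x. f x * g' x)
        + t * s' * ?E (\<lambda>x. g x * f' x) + t * t' * ?E (\<lambda>x. g x * g' x)"
    and "?E (\<lambda>x. s * f x + t * g x) = s * ?E f + t * ?E g"
    and "?E (\<lambda>x. s' * f' x + t' * g' x) = s' * ?E f' + t' * ?E g'"
    by simp_all
  moreover have "bounded_rv M (\<lambda>x. s * f x + t * g x)"
    using assms by (intro bounded_rv_add bounded_rv_mult bounded_rv_const)
  moreover have "bounded_rv M (\<lambda>x. s' * f' x + t' * g' x)"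
    using assms by (intro bounded_rv_add bounded_rv_mult bounded_rv_const)
  ultimately show ?thesis
    using assms by (simp add: covariance_eq algebra_simps)
qed

lemma covariance_distr:
  assumes "Z \<in> measurable M S" "F \<in> borel_measurable S" "G \<in> borel_measurable S"
  shows "covariance M (\<lambda>\<omega>. F (Z \<omega>)) (\<lambda>\<omega>. G (Z \<omega>)) = covariance (distr M S Z) F G"
  unfolding covariance_def using assms by (simp add: integral_distr)

lemma covariance_indep_vars:
  assumes ind: "indep_vars (\<lambda>_. S) Z UNIV" and "i \<noteq> j"
    and F: "F \<in> borel_measurable S" "\<And>p. p \<in> space S \<Longrightarrow> \<bar>F p\<bar> \<le> B"
    and G: "G \<in> borel_measurable S" "\<And>p. p \<in> space S \<Longrightarrow> \<bar>G p\<bar> \<le> C"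
  shows "covariance M (\<lambda>\<omega>. F (Z i \<omega>)) (\<lambda>\<omega>. G (Z j \<omega>)) = 0"
proof -
  let ?H = "\<lambda>k. if k = i then F else G"
  have Z: "Z k \<in> measurable M S" for k
    using ind unfolding indep_vars_def by auto
  have bounded: "bounded_rv M (\<lambda>\<omega>. F (Z i \<omega>))" "bounded_rv M (\<lambda>\<omega>. G (Z j \<omega>))"
    using bounded_rv_compose[OF Z F(1,2)] bounded_rv_compose[OF Z G(1,2)] by blast+
  have "indep_vars (\<lambda>_. borel) (\<lambda>k \<omega>. ?H k (Z k \<omega>)) {i, j}"
    by (rule indep_vars_compose2[OF indep_vars_subset[OF ind]]) (use F G in auto)
  then have "expectation (\<lambda>\<omega>. \<Prod>k\<in>{i, j}. ?H k (Z k \<omega>))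
      = (\<Prod>k\<in>{i, j}. expectation (\<lambda>\<omega>. ?H k (Z k \<omega>)))"
    by (intro indep_vars_lebesgue_integral) (use bounded bounded_rv_integrable in auto)
  then show ?thesis
    using \<open>i \<noteq> j\<close> by (simp add: covariance_eq[OF bounded])
qed

lemma covariance_sum_iid:
  fixes Z :: "nat \<Rightarrow> 'a \<Rightarrow> 'b"
  assumes ind: "indep_vars (\<lambda>_. S) Z UNIV" and dist: "\<And>i. distr M S (Z i) = distr M S (Z 0)"
    and F: "\<And>i. F i \<in> borel_measurable S" "\<And>i p. p \<in> space S \<Longrightarrow> \<bar>F i p\<bar> \<le> B i"
    and G: "\<And>i. G i \<in> borel_measurable S" "\<And>i p. p \<in> space S \<Longrightarrow> \<bar>G i p\<bar> \<le> C i"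
  shows "covariance M (\<lambda>\<omega>. \<Sum>i<n. F i (Z i \<omega>)) (\<lambda>\<omega>. \<Sum>j<n. G j (Z j \<omega>))
       = (\<Sum>i<n. covariance M (\<lambda>\<omega>. F i (Z 0 \<omega>)) (\<lambda>\<omega>. G i (Z 0 \<omega>)))"
proof -
  have Z: "Z k \<in> measurable M S" for k
    using ind unfolding indep_vars_def by auto
  have "covariance M (\<lambda>\<omega>. \<Sum>i<n. F i (Z i \<omega>)) (\<lambda>\<omega>. \<Sum>j<n. G j (Z j \<omega>))
      = (\<Sum>i<n. \<Sum>j<n. covariance M (\<lambda>\<omega>. F i (Z i \<omega>)) (\<lambda>\<omega>. G j (Z j \<omega>)))"
    using Z F G by (intro covariance_sum_sum bounded_rv_compose)
  also have "\<dots> = (\<Sum>i<n. \<Sum>j<n.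
      if j = i then covariance M (\<lambda>\<omega>. F i (Z i \<omega>)) (\<lambda>\<omega>. G i (Z i \<omega>)) else 0)"
    by (intro sum.cong refl) (auto intro!: covariance_indep_vars[OF ind] F G)
  also have "\<dots> = (\<Sum>i<n. covariance M (\<lambda>\<omega>. F i (Z i \<omega>)) (\<lambda>\<omega>. G i (Z i \<omega>)))"
    by simp
  also have "\<dots> = (\<Sum>i<n. covariance M (\<lambda>\<omega>. F i (Z 0 \<omega>)) (\<lambda>\<omega>. G i (Z 0 \<omega>)))"
    by (intro sum.cong refl) (metis covariance_distr[OF Z F(1) G(1)] dist)
  finally show ?thesis .
qed

end

section \<open>Versions of conditional distribution functions\<close>

context prob_space
begin

lemma finite_measure_subalgebra_vimage:
  assumes "X \<in> measurable M Sx"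
  shows "finite_measure_subalgebra M (vimage_algebra (space M) X Sx)"
  by unfold_locales (auto simp: subalgebra_def sets_image_in_sets[OF _ assms])

lemma cond_cdf_version_AE_eq_real_cond_exp:
  assumes X: "X \<in> measurable M Sx" and V: "V \<in> borel_measurable M"
    and g: "cond_cdf_version M Sx X V y g"
  shows "AE \<omega> in M. real_cond_exp M (vimage_algebra (space M) X Sx) (\<lambda>\<omega>. indicator {..y} (V \<omega>)) \<omega>
                    = g (X \<omega>)"
proof -
  let ?F = "vimage_algebra (space M) X Sx"
  have X_space: "X \<in> space M \<rightarrow> space Sx"
    using measurable_space[OF X] by auto
  interpret finite_measure_subalgebra M ?F
    by (rule finite_measure_subalgebra_vimage[OF X])
  have "X \<in> measurable ?F Sx"
    by (rule measurable_vimage_algebra1[OF X_space])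
  then have "(\<lambda>\<omega>. g (X \<omega>)) \<in> borel_measurable ?F"
    using g unfolding cond_cdf_version_def by (auto intro: measurable_compose)
  moreover have "integrable M (\<lambda>\<omega>. indicator {..y} (V \<omega>) :: real)"
    using V by (intro integrable_const_bound[where B=1]) auto
  moreover have "(\<integral>\<omega>\<in>A. indicator {..y} (V \<omega>) \<partial>M) = (\<integral>\<omega>\<in>A. g (X \<omega>) \<partial>M)"
    if "A \<in> sets ?F" for A
  proof -
    obtain C where C: "C \<in> sets Sx" "A = X -` C \<inter> space M"
      using \<open>A \<in> sets ?F\<close> unfolding sets_vimage_algebra2[OF X_space] by auto
    have "indicator A \<omega> = (indicator C (X \<omega>) :: real)" if "\<omega> \<in> space M" for \<omega>
      using that C(2) by (simp add: indicator_def)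
    then show ?thesis
      using g C(1) unfolding cond_cdf_version_def set_lebesgue_integral_def
      by (simp add: mult.commute cong: Bochner_Integration.integral_cong)
  qed
  ultimately show ?thesis
    using g unfolding cond_cdf_version_def by (intro real_cond_exp_charact) auto
qed

lemma cond_cdf_version_AE_bounds:
  assumes X: "X \<in> measurable M Sx" and V: "V \<in> borel_measurable M"
    and g: "cond_cdf_version M Sx X V y g"
  shows "AE \<omega> in M. 0 \<le> g (X \<omega>) \<and> g (X \<omega>) \<le> 1"
proof -
  let ?F = "vimage_algebra (space M) X Sx"
  interpret finite_measure_subalgebra M ?F
    by (rule finite_measure_subalgebra_vimage[OF X])
  have "integrable M (\<lambda>\<omega>. indicator {..y} (V \<omega>) :: real)"
    using V by (intro integrable_const_bound[where B=1]) auto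
  then have "AE \<omega> in M. 0 \<le> real_cond_exp M ?F (\<lambda>\<omega>. indicator {..y} (V \<omega>)) \<omega>"
    and "AE \<omega> in M. real_cond_exp M ?F (\<lambda>\<omega>. indicator {..y} (V \<omega>)) \<omega> \<le> 1"
    by (auto intro!: real_cond_exp_ge_c real_cond_exp_le_c)
  with cond_cdf_version_AE_eq_real_cond_exp[OF assms] show ?thesis
    by eventually_elim simp
qed

lemma cond_cdf_version_clip:
  assumes X: "X \<in> measurable M Sx" and V: "V \<in> borel_measurable M"
    and g: "cond_cdf_version M Sx X V y g"
  shows "cond_cdf_version M Sx X V y (\<lambda>x. max 0 (min 1 (g x)))"
proof -
  have [measurable]: "g \<in> borel_measurable Sx"
    using g unfolding cond_cdf_version_def by auto
  have "AE \<omega> in M. g (X \<omega>) = max 0 (min 1 (g (X \<omega>)))"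
    using cond_cdf_version_AE_bounds[OF assms] by eventually_elim auto
  then have "(\<integral>\<omega>. g (X \<omega>) * indicator A (X \<omega>) \<partial>M)
      = (\<integral>\<omega>. max 0 (min 1 (g (X \<omega>))) * indicator A (X \<omega>) \<partial>M)" if "A \<in> sets Sx" for A
    using X that by (intro integral_cong_AE) (measurable, auto elim: AE_mp)
  moreover have "integrable M (\<lambda>\<omega>. max 0 (min 1 (g (X \<omega>))))"
    using X by (intro integrable_const_bound[where B=1]) auto
  ultimately show ?thesis
    using g unfolding cond_cdf_version_def by auto
qed

lemma cond_cdf_version_integral_mult:
  assumes X: "X \<in> measurable M Sx" and V: "V \<in> borel_measurable M"
    and g: "cond_cdf_version M Sx X V y g"
    and h: "h \<in> borel_measurable Sx" "\<And>x. x \<in> space Sx \<Longrightarrow> \<bar>h x\<bar> \<le> B"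
  shows "expectation (\<lambda>\<omega>. h (X \<omega>) * indicator {..y} (V \<omega>))
       = expectation (\<lambda>\<omega>. h (X \<omega>) * g (X \<omega>))"
proof -
  let ?F = "vimage_algebra (space M) X Sx"
  interpret finite_measure_subalgebra M ?F
    by (rule finite_measure_subalgebra_vimage[OF X])
  have "X \<in> measurable ?F Sx"
    using measurable_space[OF X] by (intro measurable_vimage_algebra1) auto
  then have "(\<lambda>\<omega>. h (X \<omega>)) \<in> borel_measurable ?F"
    using h(1) by (rule measurable_compose)
  moreover have "bounded_rv M (\<lambda>\<omega>. h (X \<omega>) * indicator {..y} (V \<omega>))"
    using V by (intro bounded_rv_mult bounded_rv_compose[OF X h]
        bounded_rv_compose[of _ _ borel "indicator {..y}" 1]) auto
  ultimately have "expectation (\<lambda>\<omega>. h (X \<omega>) * indicator {..y} (V \<omega>))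
      = expectation (\<lambda>\<omega>. h (X \<omega>) * real_cond_exp M ?F (\<lambda>\<omega>. indicator {..y} (V \<omega>)) \<omega>)"
    using V by (intro real_cond_exp_intg(2)[symmetric] bounded_rv_integrable) auto
  also have "\<dots> = expectation (\<lambda>\<omega>. h (X \<omega>) * g (X \<omega>))"
    using cond_cdf_version_AE_eq_real_cond_exp[OF X V g] X h(1) g
    unfolding cond_cdf_version_def by (intro integral_cong_AE) (measurable, auto elim: AE_mp)
  finally show ?thesis .
qed

lemma covariance_indicator_cond_cdf:
  assumes X: "X \<in> measurable M Sx" and V: "V \<in> borel_measurable M"
    and g: "cond_cdf_version M Sx X V y g" "\<And>x. x \<in> space Sx \<Longrightarrow> \<bar>g x\<bar> \<le> C"
    and h: "h \<in> borel_measurable Sx" "\<And>x. x \<in> space Sx \<Longrightarrow> \<bar>h x\<bar> \<le> B"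
  shows "covariance M (\<lambda>\<omega>. indicator {..y} (V \<omega>)) (\<lambda>\<omega>. h (X \<omega>))
       = covariance M (\<lambda>\<omega>. g (X \<omega>)) (\<lambda>\<omega>. h (X \<omega>))"
proof -
  have "bounded_rv M (\<lambda>\<omega>. indicator {..y} (V \<omega>))"
    using V by (intro bounded_rv_compose[of _ _ borel "indicator {..y}" 1]) auto
  moreover have "bounded_rv M (\<lambda>\<omega>. g (X \<omega>))" "bounded_rv M (\<lambda>\<omega>. h (X \<omega>))"
    using g h X unfolding cond_cdf_version_def by (auto intro: bounded_rv_compose)
  moreover have "expectation (\<lambda>\<omega>. indicator {..y} (V \<omega>)) = expectation (\<lambda>\<omega>. g (X \<omega>))"
    using cond_cdf_version_integral_mult[OF X V g(1), of "\<lambda>_. 1" 1] by simp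
  ultimately show ?thesis
    using cond_cdf_version_integral_mult[OF X V g(1) h]
    by (simp add: covariance_eq mult.commute)
qed

end

section \<open>Covariances of the two estimators\<close>

definition arm_weight :: "(nat \<Rightarrow> nat \<Rightarrow> 'w) \<Rightarrow> nat \<Rightarrow> 'w \<Rightarrow> nat \<Rightarrow> real" where
  "arm_weight a n w i = (if a n i = w then 1 / real (n_arm a n w) else 0)"

lemma sum_n_arm:
  fixes a :: "nat \<Rightarrow> nat \<Rightarrow> 'w::finite"
  shows "(\<Sum>w\<in>UNIV. n_arm a n w) = n"
proof -
  have "(\<Sum>w\<in>UNIV. n_arm a n w) = card (\<Union>w. {i. i < n \<and> a n i = w})"
    unfolding n_arm_def by (rule card_UN_disjoint[symmetric]) auto
  also have "(\<Union>w. {i. i < n \<and> a n i = w}) = {..<n}"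
    by auto
  finally show ?thesis
    by simp
qed

lemma sum_arm_weight_mult_left:
  "(\<Sum>i<n. arm_weight a n w i * f i) = (1 / real (n_arm a n w)) * (\<Sum>i | i < n \<and> a n i = w. f i)"
proof -
  have "(\<Sum>i<n. arm_weight a n w i * f i) = (\<Sum>i<n. if a n i = w then f i / real (n_arm a n w) else 0)"
    by (intro sum.cong) (auto simp: arm_weight_def)
  also have "\<dots> = (\<Sum>i \<in> {i \<in> {..<n}. a n i = w}. f i / real (n_arm a n w))"
    by (rule sum.inter_filter[symmetric]) simp
  also have "{i \<in> {..<n}. a n i = w} = {i. i < n \<and> a n i = w}"
    by auto
  finally show ?thesis
    by (simp add: sum_divide_distrib)
qed

lemma sum_arm_weight_mult:
  "(\<Sum>i<n. arm_weight a n w i * arm_weight a n w' i) = (if w = w' then 1 / real (n_arm a n w) else 0)"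
proof -
  have "(\<Sum>i | i < n \<and> a n i = w. arm_weight a n w' i)
      = (\<Sum>i | i < n \<and> a n i = w. if w = w' then 1 / real (n_arm a n w) else 0)"
    by (intro sum.cong) (auto simp: arm_weight_def)
  then show ?thesis
    unfolding sum_arm_weight_mult_left by (simp add: n_arm_def[symmetric])
qed

lemma F_simple_eq_sum:
  "F_simple Y a y n w \<omega> = (\<Sum>i<n. arm_weight a n w i * indicator {..y} (Y i w \<omega>))"
  unfolding F_simple_def sum_arm_weight_mult_left by (intro arg_cong2[where f = "(*)"] sum.cong) auto

lemma F_tilde_eq_sum:
  "F_tilde X Y a \<gamma> y n w \<omega>
   = (\<Sum>i<n. arm_weight a n w i * indicator {..y} (Y i w \<omega>) + (1 / real n - arm_weight a n w i) * \<gamma> w y (X i \<omega>))"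
proof -
  have "F_tilde X Y a \<gamma> y n w \<omega>
      = (\<Sum>i<n. arm_weight a n w i * (indicator {..y} (Y i w \<omega>) - \<gamma> w y (X i \<omega>)))
        + (\<Sum>i<n. (1 / real n) * \<gamma> w y (X i \<omega>))"
    unfolding F_tilde_def sum_arm_weight_mult_left sum_distrib_left[symmetric]
    by (intro arg_cong2[where f = "(+)"] arg_cong2[where f = "(*)"] sum.cong) auto
  then show ?thesis
    by (simp add: sum.distrib[symmetric] algebra_simps)
qed

locale potential_outcomes_sample = prob_space M
  for M :: "'a measure" and Sx :: "'x measure"
    and X :: "nat \<Rightarrow> 'a \<Rightarrow> 'x" and Y :: "nat \<Rightarrow> 'w::finite \<Rightarrow> 'a \<Rightarrow> real"
    and \<gamma> :: "'w \<Rightarrow> real \<Rightarrow> 'x \<Rightarrow> real" +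
  assumes X_measurable [measurable]: "X i \<in> measurable M Sx"
    and Y_measurable [measurable]: "Y i w \<in> borel_measurable M"
    and indep_units: "indep_vars (\<lambda>_. Sx \<Otimes>\<^sub>M (\<Pi>\<^sub>M w\<in>UNIV. borel)) (\<lambda>i \<omega>. (X i \<omega>, \<lambda>w. Y i w \<omega>)) UNIV"
    and units_identically_distributed:
      "distr M (Sx \<Otimes>\<^sub>M (\<Pi>\<^sub>M w\<in>UNIV. borel)) (\<lambda>\<omega>. (X i \<omega>, \<lambda>w. Y i w \<omega>))
       = distr M (Sx \<Otimes>\<^sub>M (\<Pi>\<^sub>M w\<in>UNIV. borel)) (\<lambda>\<omega>. (X 0 \<omega>, \<lambda>w. Y 0 w \<omega>))"
    and cond_cdf_version_\<gamma>: "cond_cdf_version M Sx (X i) (Y i w) y (\<gamma> w y)"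
begin

text \<open>\<gamma> is only determined almost surely; truncating it to [0, 1] gives a bounded version of it.\<close>

definition cond_cdf :: "'w \<Rightarrow> real \<Rightarrow> 'x \<Rightarrow> real" where
  "cond_cdf w y x = max 0 (min 1 (\<gamma> w y x))"

definition cond_cdf_cov :: "real \<Rightarrow> 'w \<Rightarrow> 'w \<Rightarrow> real" where
  "cond_cdf_cov y w w' = covariance M (\<lambda>\<omega>. cond_cdf w y (X 0 \<omega>)) (\<lambda>\<omega>. cond_cdf w' y (X 0 \<omega>))"

lemma \<gamma>_measurable [measurable]: "\<gamma> w y \<in> borel_measurable Sx"
  using cond_cdf_version_\<gamma>[of 0 w y] unfolding cond_cdf_version_def by blast

lemma cond_cdf_measurable [measurable]: "cond_cdf w y \<in> borel_measurable Sx"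
  unfolding cond_cdf_def by measurable

lemma abs_cond_cdf_le: "\<bar>cond_cdf w y x\<bar> \<le> 1"
  unfolding cond_cdf_def by auto

lemma cond_cdf_version_cond_cdf: "cond_cdf_version M Sx (X i) (Y i w) y (cond_cdf w y)"
  unfolding cond_cdf_def by (rule cond_cdf_version_clip) (auto intro: cond_cdf_version_\<gamma>)

lemma AE_\<gamma>_eq_cond_cdf: "AE \<omega> in M. \<gamma> w y (X i \<omega>) = cond_cdf w y (X i \<omega>)"
  using cond_cdf_version_AE_bounds[OF X_measurable Y_measurable cond_cdf_version_\<gamma>[of i w y]]
  by eventually_elim (simp add: cond_cdf_def)

lemma bounded_rv_cond_cdf: "bounded_rv M (\<lambda>\<omega>. cond_cdf w y (X i \<omega>))"
  by (rule bounded_rv_compose[OF X_measurable cond_cdf_measurable abs_cond_cdf_le])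

lemma bounded_rv_indicator_Y: "bounded_rv M (\<lambda>\<omega>. indicator {..y} (Y i w \<omega>))"
  by (rule bounded_rv_compose[of _ _ borel _ 1]) auto

lemma covariance_indicator_Y_cond_cdf:
  "covariance M (\<lambda>\<omega>. indicator {..y} (Y 0 w \<omega>)) (\<lambda>\<omega>. cond_cdf w' y (X 0 \<omega>)) = cond_cdf_cov y w w'"
  unfolding cond_cdf_cov_def
  by (rule covariance_indicator_cond_cdf[OF X_measurable Y_measurable cond_cdf_version_cond_cdf
        abs_cond_cdf_le cond_cdf_measurable abs_cond_cdf_le])

lemma cond_cdf_cov_commute: "cond_cdf_cov y w w' = cond_cdf_cov y w' w"
  unfolding cond_cdf_cov_def by (rule covariance_commute)

lemma covariance_sum_units:
  fixes b c b' c' :: "nat \<Rightarrow> real"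
  shows "covariance M
      (\<lambda>\<omega>. \<Sum>i<n. b i * indicator {..y} (Y i w \<omega>) + c i * cond_cdf w y (X i \<omega>))
      (\<lambda>\<omega>. \<Sum>i<n. b' i * indicator {..y} (Y i w' \<omega>) + c' i * cond_cdf w' y (X i \<omega>))
    = (\<Sum>i<n. b i * b' i * covariance M (\<lambda>\<omega>. indicator {..y} (Y 0 w \<omega>)) (\<lambda>\<omega>. indicator {..y} (Y 0 w' \<omega>))
             + (b i * c' i + c i * b' i + c i * c' i) * cond_cdf_cov y w w')"
proof -
  let ?S = "Sx \<Otimes>\<^sub>M (\<Pi>\<^sub>M w\<in>UNIV. borel)"
  let ?Z = "\<lambda>i \<omega>. (X i \<omega>, \<lambda>w. Y i w \<omega>)"
  let ?F = "\<lambda>b c w i (p :: 'x \<times> ('w \<Rightarrow> real)). b i * indicator {..y} (snd p w) + c i * cond_cdf w y (fst p)"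
  have bound: "\<bar>?F b c w i p\<bar> \<le> \<bar>b i\<bar> + \<bar>c i\<bar>" for b c w i p
    using abs_cond_cdf_le[of w y "fst p"]
    by (intro order.trans[OF abs_triangle_ineq add_mono]) (auto simp: abs_mult indicator_def intro: mult_left_le)
  have "covariance M (\<lambda>\<omega>. \<Sum>i<n. ?F b c w i (?Z i \<omega>)) (\<lambda>\<omega>. \<Sum>i<n. ?F b' c' w' i (?Z i \<omega>))
      = (\<Sum>i<n. covariance M (\<lambda>\<omega>. ?F b c w i (?Z 0 \<omega>)) (\<lambda>\<omega>. ?F b' c' w' i (?Z 0 \<omega>)))"
    by (rule covariance_sum_iid[OF indep_units units_identically_distributed _ bound _ bound]) measurable
  also have "\<dots> = (\<Sum>i<n. b i * b' i * covariance M (\<lambda>\<omega>. indicator {..y} (Y 0 w \<omega>)) (\<lambda>\<omega>. indicator {..y} (Y 0 w' \<omega>))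
             + (b i * c' i + c i * b' i + c i * c' i) * cond_cdf_cov y w w')"
    using covariance_indicator_Y_cond_cdf[of y w w'] covariance_indicator_Y_cond_cdf[of y w' w]
    by (simp add: covariance_linear_combination bounded_rv_cond_cdf bounded_rv_indicator_Y
        covariance_commute[of M "\<lambda>\<omega>. cond_cdf w y (X 0 \<omega>)"] cond_cdf_cov_commute[of y w' w]
        cond_cdf_cov_def[symmetric] algebra_simps)
  finally show ?thesis
    by simp
qed

lemma covariance_F_simple:
  "covariance M (F_simple Y a y n w) (F_simple Y a y n w')
   = (if w = w' then 1 / real (n_arm a n w) else 0)
     * covariance M (\<lambda>\<omega>. indicator {..y} (Y 0 w \<omega>)) (\<lambda>\<omega>. indicator {..y} (Y 0 w' \<omega>))"
  using covariance_sum_units[of "arm_weight a n w" y w "\<lambda>_. 0" n "arm_weight a n w'" w' "\<lambda>_. 0"]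
  by (simp add: F_simple_eq_sum[abs_def] sum_distrib_right[symmetric] sum_arm_weight_mult)

lemma covariance_F_tilde:
  "covariance M (F_tilde X Y a \<gamma> y n w) (F_tilde X Y a \<gamma> y n w')
   = (if w = w' then 1 / real (n_arm a n w) else 0)
     * (covariance M (\<lambda>\<omega>. indicator {..y} (Y 0 w \<omega>)) (\<lambda>\<omega>. indicator {..y} (Y 0 w' \<omega>)) - cond_cdf_cov y w w')
     + cond_cdf_cov y w w' / real n"
proof -
  let ?s = "arm_weight a n" and ?C = "covariance M (\<lambda>\<omega>. indicator {..y} (Y 0 w \<omega>)) (\<lambda>\<omega>. indicator {..y} (Y 0 w' \<omega>))"
  let ?T = "\<lambda>w \<omega>. \<Sum>i<n. ?s w i * indicator {..y} (Y i w \<omega>) + (1 / real n - ?s w i) * cond_cdf w y (X i \<omega>)"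
  have "AE \<omega> in M. F_tilde X Y a \<gamma> y n w \<omega> = ?T w \<omega>" for w
  proof -
    have "AE \<omega> in M. \<forall>i. \<gamma> w y (X i \<omega>) = cond_cdf w y (X i \<omega>)"
      by (simp add: AE_all_countable AE_\<gamma>_eq_cond_cdf)
    then show ?thesis
      by eventually_elim (simp add: F_tilde_eq_sum)
  qed
  then have "covariance M (F_tilde X Y a \<gamma> y n w) (F_tilde X Y a \<gamma> y n w') = covariance M (?T w) (?T w')"
    unfolding F_tilde_def by (intro covariance_cong_AE) measurable
  also have "\<dots> = (\<Sum>i<n. ?s w i * ?s w' i * (?C - cond_cdf_cov y w w') + (1 / real n)\<^sup>2 * cond_cdf_cov y w w')"
    unfolding covariance_sum_units by (intro sum.cong refl) (simp add: algebra_simps power2_eq_square)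
  also have "\<dots> = (\<Sum>i<n. ?s w i * ?s w' i) * (?C - cond_cdf_cov y w w') + real n * (1 / real n)\<^sup>2 * cond_cdf_cov y w w'"
    by (simp add: sum.distrib sum_distrib_right)
  also have "real n * (1 / real n)\<^sup>2 = 1 / real n"
    by (simp add: power2_eq_square)
  finally show ?thesis
    by (simp add: sum_arm_weight_mult)
qed

lemma covariance_F_simple_minus_F_tilde:
  "covariance M (F_simple Y a y n w) (F_simple Y a y n w') - covariance M (F_tilde X Y a \<gamma> y n w) (F_tilde X Y a \<gamma> y n w')
   = (if w = w' then cond_cdf_cov y w w / real (n_arm a n w) else 0) - cond_cdf_cov y w w' / real n"
  unfolding covariance_F_simple covariance_F_tilde by (simp add: diff_divide_distrib)

lemma expectation_cond_cdf: "expectation (\<lambda>\<omega>. cond_cdf w y (X 0 \<omega>)) = prob {\<omega> \<in> space M. Y 0 w \<omega> \<le> y}"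
proof -
  have "expectation (\<lambda>\<omega>. cond_cdf w y (X 0 \<omega>)) = expectation (\<lambda>\<omega>. indicator {..y} (Y 0 w \<omega>))"
    using cond_cdf_version_integral_mult[OF X_measurable Y_measurable cond_cdf_version_cond_cdf, of "\<lambda>_. 1" 1]
    by simp
  also have "\<dots> = expectation (indicator {\<omega> \<in> space M. Y 0 w \<omega> \<le> y})"
    by (intro Bochner_Integration.integral_cong) (auto simp: indicator_def)
  finally show ?thesis
    by simp
qed

lemma cond_cdf_cov_eq_0_imp_AE_const:
  assumes "cond_cdf_cov y w w = 0"
  shows "AE \<omega> in M. \<gamma> w y (X 0 \<omega>) = prob {\<omega>' \<in> space M. Y 0 w \<omega>' \<le> y}"
proof -
  let ?\<psi> = "\<lambda>\<omega>. cond_cdf w y (X 0 \<omega>)"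
  have "expectation (\<lambda>\<omega>. (?\<psi> \<omega> - expectation ?\<psi>)\<^sup>2) = 0"
    using assms unfolding cond_cdf_cov_def Var_eq_covariance[symmetric] Var_def .
  moreover have "integrable M (\<lambda>\<omega>. (?\<psi> \<omega> - expectation ?\<psi>)\<^sup>2)"
    unfolding power2_eq_square
    by (intro bounded_rv_integrable bounded_rv_mult bounded_rv_diff bounded_rv_cond_cdf bounded_rv_const)
  ultimately have "AE \<omega> in M. (?\<psi> \<omega> - expectation ?\<psi>)\<^sup>2 = 0"
    by (subst (asm) integral_nonneg_eq_0_iff_AE) auto
  with AE_\<gamma>_eq_cond_cdf[of w y 0] show ?thesis
    by eventually_elim (simp add: expectation_cond_cdf)
qed

end

section \<open>The gain matrix\<close>

lemma psd_scaleR: "psd A \<Longrightarrow> 0 \<le> t \<Longrightarrow> psd (t *\<^sub>R A)"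
  unfolding psd_def by (simp add: scaleR_matrix_vector_assoc[symmetric])

lemma pos_definite_imp_psd_minus_scaled_identity:
  fixes A :: "real^'n^'n"
  assumes pos: "\<And>v. v \<noteq> 0 \<Longrightarrow> 0 < v \<bullet> (A *v v)"
  shows "\<exists>c>0. psd (A - c *\<^sub>R mat 1)"
proof -
  have "continuous_on (sphere 0 1) (\<lambda>v::real^'n. v \<bullet> (A *v v))"
    by (intro continuous_intros)
  then obtain v0 where v0: "v0 \<in> sphere 0 1" and min: "\<And>u. u \<in> sphere 0 1 \<Longrightarrow> v0 \<bullet> (A *v v0) \<le> u \<bullet> (A *v u)"
    using continuous_attains_inf[OF compact_sphere _ \<open>continuous_on _ _\<close>] by auto
  define c where "c = v0 \<bullet> (A *v v0)"
  have "c > 0"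
    using v0 pos[of v0] unfolding c_def by fastforce
  have "c * (v \<bullet> v) \<le> v \<bullet> (A *v v)" for v
  proof (cases "v = 0")
    case False
    define u where "u = (1 / norm v) *\<^sub>R v"
    have "u \<in> sphere 0 1" and v: "v = norm v *\<^sub>R u"
      using False unfolding u_def by auto
    have "v \<bullet> (A *v v) = (norm v)\<^sup>2 * (u \<bullet> (A *v u))"
      by (subst (1 2) v) (simp add: matrix_vector_mult_scaleR power2_eq_square)
    moreover have "v \<bullet> v = (norm v)\<^sup>2"
      by (simp add: power2_norm_eq_inner)
    ultimately show ?thesis
      using min[OF \<open>u \<in> sphere 0 1\<close>] unfolding c_def by (metis mult.commute mult_left_mono zero_le_power2)
  qed simp
  then have "psd (A - c *\<^sub>R mat 1)"
    unfolding psd_def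
    by (simp add: matrix_vector_mult_diff_rdistrib scaleR_matrix_vector_assoc[symmetric] inner_diff_right)
  with \<open>c > 0\<close> show ?thesis
    by blast
qed

text \<open>For C the covariance matrix of the \<gamma>_y^(w)(X), this is n times the leading term of
  Cov(\<theta>^simple) - Cov(\<theta>~).\<close>

definition gain_matrix :: "('w \<Rightarrow> real) \<Rightarrow> real^'w^'w \<Rightarrow> real^'w^'w" where
  "gain_matrix \<pi> C = (\<chi> w w'. (if w = w' then C $ w $ w / \<pi> w else 0) - C $ w $ w')"

lemma sum_square_div_minus_square_sum:
  fixes x \<pi> :: "'w \<Rightarrow> real"
  assumes "finite I" "\<And>w. w \<in> I \<Longrightarrow> 0 < \<pi> w" "sum \<pi> I = 1"
  shows "(\<Sum>w\<in>I. (x w)\<^sup>2 / \<pi> w) - (\<Sum>w\<in>I. x w)\<^sup>2 = (\<Sum>w\<in>I. \<pi> w * (x w / \<pi> w - (\<Sum>w\<in>I. x w))\<^sup>2)"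
proof -
  define m where "m = (\<Sum>w\<in>I. x w)"
  have "(\<Sum>w\<in>I. \<pi> w * (x w / \<pi> w - m)\<^sup>2) = (\<Sum>w\<in>I. (x w)\<^sup>2 / \<pi> w - 2 * m * x w + m\<^sup>2 * \<pi> w)"
  proof (intro sum.cong refl)
    fix w assume "w \<in> I"
    with assms(2) have "\<pi> w \<noteq> 0" by fastforce
    then show "\<pi> w * (x w / \<pi> w - m)\<^sup>2 = (x w)\<^sup>2 / \<pi> w - 2 * m * x w + m\<^sup>2 * \<pi> w"
      by (simp add: power2_eq_square field_simps)
  qed
  also have "\<dots> = (\<Sum>w\<in>I. (x w)\<^sup>2 / \<pi> w) - m\<^sup>2"
    using assms(3) by (simp add: sum.distrib sum_subtractf sum_distrib_left[symmetric] m_def power2_eq_square)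
  finally show ?thesis
    unfolding m_def by simp
qed

lemma gain_matrix_mult_vec_nth:
  "(gain_matrix \<pi> C *v v) $ w = C $ w $ w / \<pi> w * v $ w - (\<Sum>w'\<in>UNIV. C $ w $ w' * v $ w')"
proof -
  have "(gain_matrix \<pi> C *v v) $ w
      = (\<Sum>w'\<in>UNIV. if w = w' then C $ w $ w / \<pi> w * v $ w' else 0) - (\<Sum>w'\<in>UNIV. C $ w $ w' * v $ w')"
    unfolding gain_matrix_def matrix_vector_mult_def
    by (simp add: left_diff_distrib sum_subtractf if_distrib[where f = "\<lambda>z. z * _"] cong: if_cong)
  then show ?thesis
    by (simp add: sum.delta)
qed

context prob_space
begin

lemma quadratic_form_gain_matrix:
  fixes \<Psi> :: "'a \<Rightarrow> real^'w::finite"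
  assumes bounded: "\<And>w. bounded_rv M (\<lambda>\<omega>. \<Psi> \<omega> $ w)"
  defines "u w \<omega> \<equiv> \<Psi> \<omega> $ w - expectation (\<lambda>\<omega>. \<Psi> \<omega> $ w)"
  shows "v \<bullet> (gain_matrix \<pi> (cov_matrix M \<Psi>) *v v)
       = expectation (\<lambda>\<omega>. (\<Sum>w\<in>UNIV. (v $ w * u w \<omega>)\<^sup>2 / \<pi> w) - (\<Sum>w\<in>UNIV. v $ w * u w \<omega>)\<^sup>2)"
proof -
  have "bounded_rv M (u w)" for w
    unfolding u_def using bounded by (intro bounded_rv_diff bounded_rv_const)
  then have integrable: "integrable M (\<lambda>\<omega>. u w \<omega> * u w' \<omega>)" for w w'
    by (intro bounded_rv_integrable bounded_rv_mult)
  have cov: "cov_matrix M \<Psi> $ w $ w' = expectation (\<lambda>\<omega>. u w \<omega> * u w' \<omega>)" for w w'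
    unfolding cov_matrix_def covariance_def u_def by simp
  have "expectation (\<lambda>\<omega>. (\<Sum>w\<in>UNIV. (v $ w * u w \<omega>)\<^sup>2 / \<pi> w) - (\<Sum>w\<in>UNIV. v $ w * u w \<omega>)\<^sup>2)
      = expectation (\<lambda>\<omega>. (\<Sum>w\<in>UNIV. (v $ w)\<^sup>2 / \<pi> w * (u w \<omega> * u w \<omega>))
                        - (\<Sum>w\<in>UNIV. \<Sum>w'\<in>UNIV. v $ w * v $ w' * (u w \<omega> * u w' \<omega>)))"
    by (simp add: power2_eq_square sum_product algebra_simps)
  also have "\<dots> = (\<Sum>w\<in>UNIV. (v $ w)\<^sup>2 / \<pi> w * expectation (\<lambda>\<omega>. u w \<omega> * u w \<omega>))
       - (\<Sum>w\<in>UNIV. \<Sum>w'\<in>UNIV. v $ w * v $ w' * expectation (\<lambda>\<omega>. u w \<omega> * u w' \<omega>))"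
    using integrable by (simp add: integrable_sum)
  also have "\<dots> = v \<bullet> (gain_matrix \<pi> (cov_matrix M \<Psi>) *v v)"
    unfolding inner_vec_def inner_real_def gain_matrix_mult_vec_nth cov
    by (simp add: right_diff_distrib sum_subtractf sum_distrib_left power2_eq_square algebra_simps)
  finally show ?thesis ..
qed

lemma psd_gain_matrix:
  fixes \<Psi> :: "'a \<Rightarrow> real^'w::finite"
  assumes "\<And>w. bounded_rv M (\<lambda>\<omega>. \<Psi> \<omega> $ w)" "\<And>w. 0 < \<pi> w" "sum \<pi> UNIV = 1"
  shows "psd (gain_matrix \<pi> (cov_matrix M \<Psi>))"
  unfolding psd_def quadratic_form_gain_matrix[OF assms(1)] sum_square_div_minus_square_sum[OF finite assms(2,3)]
  using assms(2) by (intro allI Bochner_Integration.integral_nonneg sum_nonneg mult_nonneg_nonneg)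
    (auto intro: less_imp_le)

lemma weighted_square_gap_AE_eq:
  fixes x :: "'w::finite \<Rightarrow> 'a \<Rightarrow> real"
  assumes bounded: "\<And>w. bounded_rv M (x w)" and \<pi>: "\<And>w. 0 < \<pi> w" "sum \<pi> UNIV = 1"
    and "expectation (\<lambda>\<omega>. (\<Sum>w\<in>UNIV. (x w \<omega>)\<^sup>2 / \<pi> w) - (\<Sum>w\<in>UNIV. x w \<omega>)\<^sup>2) \<le> 0"
  shows "AE \<omega> in M. \<forall>w. x w \<omega> / \<pi> w = (\<Sum>w'\<in>UNIV. x w' \<omega>)"
proof -
  define Q where "Q \<omega> = (\<Sum>w\<in>UNIV. \<pi> w * (x w \<omega> / \<pi> w - (\<Sum>w'\<in>UNIV. x w' \<omega>))\<^sup>2)" for \<omega>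
  have term_nonneg: "0 \<le> \<pi> w * (x w \<omega> / \<pi> w - (\<Sum>w'\<in>UNIV. x w' \<omega>))\<^sup>2" for \<omega> w
    using \<pi>(1)[of w] by simp
  then have Q_nonneg: "0 \<le> Q \<omega>" for \<omega>
    unfolding Q_def by (intro sum_nonneg)
  have "bounded_rv M (\<lambda>\<omega>. (1 / \<pi> w) * x w \<omega> - (\<Sum>w'\<in>UNIV. x w' \<omega>))" for w
    by (intro bounded_rv_diff bounded_rv_mult bounded_rv_const bounded_rv_sum bounded)
  then have "bounded_rv M Q"
    unfolding Q_def power2_eq_square by (intro bounded_rv_sum bounded_rv_mult bounded_rv_const) simp_all
  moreover have "expectation Q = 0"
  proof (rule order.antisym)
    show "expectation Q \<le> 0"
      using assms(4) unfolding Q_def by (simp add: sum_square_div_minus_square_sum[OF finite \<pi>])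
    show "0 \<le> expectation Q"
      using Q_nonneg by (simp add: Bochner_Integration.integral_nonneg)
  qed
  ultimately have "AE \<omega> in M. Q \<omega> = 0"
    using Q_nonneg by (subst (asm) integral_nonneg_eq_0_iff_AE) (auto intro: bounded_rv_integrable)
  then show ?thesis
  proof eventually_elim
    case (elim \<omega>)
    then have "\<pi> w * (x w \<omega> / \<pi> w - (\<Sum>w'\<in>UNIV. x w' \<omega>))\<^sup>2 = 0" for w
      unfolding Q_def using term_nonneg by (subst (asm) sum_nonneg_eq_0_iff) auto
    then show ?case
      using \<pi>(1) by (auto dest: less_imp_neq[symmetric])
  qed
qed

text \<open>If the quadratic form vanished at v, then almost surely v_w u_w / \<pi>_w = v_w' u_w' / \<pi>_w'
  for the centred components u_w, so two of them would be proportional.\<close>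

lemma gain_matrix_pos_definite:
  fixes \<Psi> :: "'a \<Rightarrow> real^'w::finite"
  assumes bounded: "\<And>w. bounded_rv M (\<lambda>\<omega>. \<Psi> \<omega> $ w)"
    and \<pi>: "\<And>w. 0 < \<pi> w" "sum \<pi> UNIV = 1"
    and two_arms: "(w1 :: 'w) \<noteq> w2"
    and Var_pos: "\<And>w w' r. w \<noteq> w' \<Longrightarrow> 0 < Var M (\<lambda>\<omega>. \<Psi> \<omega> $ w - r * \<Psi> \<omega> $ w')"
    and "v \<noteq> 0"
  shows "0 < v \<bullet> (gain_matrix \<pi> (cov_matrix M \<Psi>) *v v)"
proof (rule ccontr)
  define u where "u w \<omega> = \<Psi> \<omega> $ w - expectation (\<lambda>\<omega>. \<Psi> \<omega> $ w)" for w \<omega>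
  have u_bounded: "bounded_rv M (u w)" for w
    unfolding u_def using bounded by (intro bounded_rv_diff bounded_rv_const)
  assume "\<not> 0 < v \<bullet> (gain_matrix \<pi> (cov_matrix M \<Psi>) *v v)"
  then have "AE \<omega> in M. \<forall>w. v $ w * u w \<omega> / \<pi> w = (\<Sum>w'\<in>UNIV. v $ w' * u w' \<omega>)"
    using u_bounded \<pi> unfolding quadratic_form_gain_matrix[OF bounded] u_def[symmetric]
    by (intro weighted_square_gap_AE_eq bounded_rv_mult bounded_rv_const) auto
  obtain w0 where "v $ w0 \<noteq> 0"
    using \<open>v \<noteq> 0\<close> by (auto simp: vec_eq_iff)
  obtain w' where "w' \<noteq> w0"
    using two_arms by metis
  define r where "r = \<pi> w0 * v $ w' / (\<pi> w' * v $ w0)"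
  have "AE \<omega> in M. (u w0 \<omega> - r * u w' \<omega>)\<^sup>2 = 0"
    using \<open>AE \<omega> in M. \<forall>w. _ = _\<close>
  proof eventually_elim
    case (elim \<omega>)
    then have "v $ w0 * u w0 \<omega> / \<pi> w0 = v $ w' * u w' \<omega> / \<pi> w'"
      by metis
    then show ?case
      using \<pi>(1)[of w0] \<pi>(1)[of w'] \<open>v $ w0 \<noteq> 0\<close> unfolding r_def by (simp add: field_simps)
  qed
  moreover have "Var M (\<lambda>\<omega>. \<Psi> \<omega> $ w0 - r * \<Psi> \<omega> $ w') = expectation (\<lambda>\<omega>. (u w0 \<omega> - r * u w' \<omega>)\<^sup>2)"
    unfolding Var_def u_def using bounded by (simp add: bounded_rv_integrable algebra_simps)
  moreover have "(\<lambda>\<omega>. (u w0 \<omega> - r * u w' \<omega>)\<^sup>2) \<in> borel_measurable M"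
    using u_bounded[of w0] u_bounded[of w'] unfolding bounded_rv_def by auto
  ultimately have "Var M (\<lambda>\<omega>. \<Psi> \<omega> $ w0 - r * \<Psi> \<omega> $ w') = 0"
    by (simp add: integral_cong_AE[where g = "\<lambda>_. 0"])
  with Var_pos[OF \<open>w' \<noteq> w0\<close>[symmetric], of r] show False
    by simp
qed

end

section \<open>Asymptotics in 1/n\<close>

lemma smallo_inverse_iff:
  fixes f :: "nat \<Rightarrow> real"
  shows "f \<in> o(\<lambda>n. 1 / real n) \<longleftrightarrow> (\<lambda>n. f n * real n) \<longlonglongrightarrow> 0"
proof
  assume "f \<in> o(\<lambda>n. 1 / real n)"
  then show "(\<lambda>n. f n * real n) \<longlonglongrightarrow> 0"
    using smalloD_tendsto by fastforce
next
  assume "(\<lambda>n. f n * real n) \<longlonglongrightarrow> 0"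
  moreover have "\<forall>\<^sub>F n in at_top. 1 / real n \<noteq> 0"
    using eventually_gt_at_top[of 0] by eventually_elim auto
  ultimately show "f \<in> o(\<lambda>n. 1 / real n)"
    by (intro smalloI_tendsto) simp_all
qed

lemma inverse_count_asymp:
  fixes k :: "nat \<Rightarrow> nat"
  assumes "(\<lambda>n. real (k n) / real n) \<longlonglongrightarrow> p" "p \<noteq> 0"
  shows "(\<lambda>n. 1 / real (k n) - 1 / (real n * p)) \<in> o(\<lambda>n. 1 / real n)"
  unfolding smallo_inverse_iff
proof (rule Lim_transform_eventually)
  have "(\<lambda>n. inverse (real (k n) / real n) - 1 / p) \<longlonglongrightarrow> inverse p - 1 / p"
    by (intro tendsto_intros assms)
  then show "(\<lambda>n. real n / real (k n) - 1 / p) \<longlonglongrightarrow> 0"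
    by (simp add: inverse_eq_divide)
  show "\<forall>\<^sub>F n in sequentially. real n / real (k n) - 1 / p = (1 / real (k n) - 1 / (real n * p)) * real n"
    using eventually_gt_at_top[of 0] by eventually_elim (simp add: field_simps)
qed

lemma const_div_smallo_inverse_iff: "(\<lambda>n. c / real n) \<in> o(\<lambda>n. 1 / real n) \<longleftrightarrow> c = 0"
proof -
  have "(\<lambda>n. c / real n * real n) \<longlonglongrightarrow> c"
    by (rule tendsto_eventually) (use eventually_gt_at_top[of 0] in \<open>eventually_elim, simp\<close>)
  then show ?thesis
    unfolding smallo_inverse_iff using LIMSEQ_unique by fastforce
qed

section \<open>The randomized experiment\<close>

locale randomized_experiment = potential_outcomes_sample M Sx X Y \<gamma>
  for M :: "'a measure" and Sx :: "'x measure"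
    and X :: "nat \<Rightarrow> 'a \<Rightarrow> 'x" and Y :: "nat \<Rightarrow> 'w::finite \<Rightarrow> 'a \<Rightarrow> real"
    and \<gamma> :: "'w \<Rightarrow> real \<Rightarrow> 'x \<Rightarrow> real" +
  fixes a :: "nat \<Rightarrow> nat \<Rightarrow> 'w" and \<pi> :: "'w \<Rightarrow> real"
  assumes \<pi>_pos: "0 < \<pi> w" and \<pi>_less_1: "\<pi> w < 1"
    and arm_frequency: "(\<lambda>n. real (n_arm a n w) / real n) \<longlonglongrightarrow> \<pi> w"
begin

lemma sum_\<pi>: "sum \<pi> UNIV = 1"
proof -
  have "(\<lambda>n. \<Sum>w\<in>UNIV. real (n_arm a n w) / real n) \<longlonglongrightarrow> sum \<pi> UNIV"
    by (intro tendsto_sum arm_frequency)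
  moreover have "\<forall>\<^sub>F n in sequentially. (\<Sum>w\<in>UNIV. real (n_arm a n w) / real n) = 1"
    using eventually_gt_at_top[of 0]
    by eventually_elim (simp add: sum_divide_distrib[symmetric] sum_n_arm flip: of_nat_sum)
  then have "(\<lambda>n. \<Sum>w\<in>UNIV. real (n_arm a n w) / real n) \<longlonglongrightarrow> 1"
    by (rule tendsto_eventually)
  ultimately show ?thesis
    by (rule LIMSEQ_unique)
qed

lemma two_arms: "\<exists>w1 w2 :: 'w. w1 \<noteq> w2"
proof (rule ccontr)
  assume "\<not> ?thesis"
  then have "UNIV = {undefined :: 'w}"
    by auto
  then have "sum \<pi> UNIV = \<pi> undefined"
    by (metis add.right_neutral empty_iff finite.emptyI sum.empty sum.insert)
  with sum_\<pi> \<pi>_less_1[of undefined] show False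
    by simp
qed

definition remainder :: "real \<Rightarrow> nat \<Rightarrow> real^'w^'w" where
  "remainder y n = (\<chi> w w'. if w = w' then cond_cdf_cov y w w * (1 / real (n_arm a n w) - 1 / (real n * \<pi> w)) else 0)"

lemma remainder_smallo: "(\<lambda>n. remainder y n $ w $ w') \<in> o(\<lambda>n. 1 / real n)"
  using inverse_count_asymp[OF arm_frequency less_imp_neq[OF \<pi>_pos, symmetric]]
  by (cases "w = w'") (simp_all add: remainder_def)

abbreviation cond_cdf_vec :: "real \<Rightarrow> 'a \<Rightarrow> real^'w" where
  "cond_cdf_vec y \<omega> \<equiv> \<chi> w. cond_cdf w y (X 0 \<omega>)"

lemma cov_matrix_theta_diff:
  "cov_matrix M (theta_simple Y a y n) - cov_matrix M (theta_tilde X Y a \<gamma> y n) - remainder y n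
   = (1 / real n) *\<^sub>R gain_matrix \<pi> (cov_matrix M (cond_cdf_vec y))"
proof -
  have "(if w = w' then cond_cdf_cov y w w / real (n_arm a n w) else 0) - cond_cdf_cov y w w' / real n
        - (if w = w' then cond_cdf_cov y w w * (1 / real (n_arm a n w) - 1 / (real n * \<pi> w)) else 0)
      = 1 / real n * ((if w = w' then cond_cdf_cov y w w / \<pi> w else 0) - cond_cdf_cov y w w')" for w w'
    by (cases "w = w'") (simp_all add: right_diff_distrib diff_divide_distrib)
  then show ?thesis
    by (simp add: vec_eq_iff cov_matrix_def theta_simple_def theta_tilde_def remainder_def gain_matrix_def
        covariance_F_simple_minus_F_tilde cond_cdf_cov_def[symmetric])
qed

lemma Var_F_simple_minus_F_tilde:
  "Var M (F_simple Y a y n w) - Var M (F_tilde X Y a \<gamma> y n w)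
   = remainder y n $ w $ w + cond_cdf_cov y w w * (1 / \<pi> w - 1) / real n"
proof -
  have "cond_cdf_cov y w w * (1 / \<pi> w - 1) / real n
      = cond_cdf_cov y w w / (real n * \<pi> w) - cond_cdf_cov y w w / real n"
    using \<pi>_pos[of w] by (cases "n = 0") (simp_all add: field_simps)
  then show ?thesis
    using covariance_F_simple_minus_F_tilde[of a y n w w]
    by (simp add: Var_eq_covariance remainder_def right_diff_distrib)
qed

lemma Var_F_tilde_le_Var_F_simple:
  "\<exists>R. R \<in> o(\<lambda>n. 1 / real n) \<and> (\<forall>n. Var M (F_tilde X Y a \<gamma> y n w) + R n \<le> Var M (F_simple Y a y n w))"
proof (intro exI conjI allI)
  show "(\<lambda>n. remainder y n $ w $ w) \<in> o(\<lambda>n. 1 / real n)"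
    by (rule remainder_smallo)
  have nonneg: "0 \<le> cond_cdf_cov y w w * (1 / \<pi> w - 1) / real n" for n
    using \<pi>_pos[of w] \<pi>_less_1[of w] unfolding cond_cdf_cov_def
    by (intro divide_nonneg_nonneg mult_nonneg_nonneg covariance_self_nonneg) simp_all
  then show "Var M (F_tilde X Y a \<gamma> y n w) + remainder y n $ w $ w \<le> Var M (F_simple Y a y n w)" for n
    using Var_F_simple_minus_F_tilde[of y n w] nonneg[of n] by linarith
qed

lemma Var_gap_smallo_imp_AE_const:
  assumes "(\<lambda>n. Var M (F_simple Y a y n w) - Var M (F_tilde X Y a \<gamma> y n w)) \<in> o(\<lambda>n. 1 / real n)"
  shows "AE \<omega> in M. \<gamma> w y (X 0 \<omega>) = prob {\<omega>' \<in> space M. Y 0 w \<omega>' \<le> y}"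
proof (rule cond_cdf_cov_eq_0_imp_AE_const)
  have "(\<lambda>n. (Var M (F_simple Y a y n w) - Var M (F_tilde X Y a \<gamma> y n w)) - remainder y n $ w $ w)
        \<in> o(\<lambda>n. 1 / real n)"
    using assms remainder_smallo by (rule sum_in_smallo(2))
  then have "cond_cdf_cov y w w * (1 / \<pi> w - 1) = 0"
    unfolding Var_F_simple_minus_F_tilde by (simp add: const_div_smallo_inverse_iff)
  moreover have "1 / \<pi> w - 1 \<noteq> 0"
    using \<pi>_pos[of w] \<pi>_less_1[of w] by (simp add: field_simps)
  ultimately show "cond_cdf_cov y w w = 0"
    by auto
qed

lemma bounded_rv_cond_cdf_vec: "bounded_rv M (\<lambda>\<omega>. cond_cdf_vec y \<omega> $ w)"
  by (simp add: bounded_rv_cond_cdf)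

lemma psd_cov_matrix_theta_diff:
  "\<exists>R :: nat \<Rightarrow> real^'w^'w. (\<forall>w w'. (\<lambda>n. R n $ w $ w') \<in> o(\<lambda>n. 1 / real n)) \<and>
     (\<forall>n. psd (cov_matrix M (theta_simple Y a y n) - cov_matrix M (theta_tilde X Y a \<gamma> y n) - R n))"
proof (intro exI[of _ "remainder y"] conjI allI)
  show "(\<lambda>n. remainder y n $ w $ w') \<in> o(\<lambda>n. 1 / real n)" for w w'
    by (rule remainder_smallo)
  show "psd (cov_matrix M (theta_simple Y a y n) - cov_matrix M (theta_tilde X Y a \<gamma> y n) - remainder y n)" for n
    unfolding cov_matrix_theta_diff
    by (intro psd_scaleR psd_gain_matrix[OF bounded_rv_cond_cdf_vec \<pi>_pos sum_\<pi>]) simp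
qed

lemma pos_definite_cov_matrix_theta_diff:
  assumes "\<And>w w' r. w \<noteq> w' \<Longrightarrow> 0 < Var M (\<lambda>\<omega>. \<gamma> w y (X 0 \<omega>) - r * \<gamma> w' y (X 0 \<omega>))"
  shows "\<exists>c>0. \<exists>R :: nat \<Rightarrow> real^'w^'w. (\<forall>w w'. (\<lambda>n. R n $ w $ w') \<in> o(\<lambda>n. 1 / real n)) \<and>
     (\<forall>n. psd (cov_matrix M (theta_simple Y a y n) - cov_matrix M (theta_tilde X Y a \<gamma> y n) - R n
                 - (c / real n) *\<^sub>R mat 1))"
proof -
  have "Var M (\<lambda>\<omega>. \<gamma> w y (X 0 \<omega>) - r * \<gamma> w' y (X 0 \<omega>))
      = Var M (\<lambda>\<omega>. cond_cdf_vec y \<omega> $ w - r * cond_cdf_vec y \<omega> $ w')" for w w' r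
    using AE_\<gamma>_eq_cond_cdf[of w y 0] AE_\<gamma>_eq_cond_cdf[of w' y 0]
    by (intro Var_cong_AE) (measurable, auto elim: AE_mp)
  with assms have Var_pos: "0 < Var M (\<lambda>\<omega>. cond_cdf_vec y \<omega> $ w - r * cond_cdf_vec y \<omega> $ w')"
    if "w \<noteq> w'" for w w' r
    using that by simp
  obtain w1 w2 :: 'w where "w1 \<noteq> w2"
    using two_arms by blast
  then obtain c where "c > 0" and c: "psd (gain_matrix \<pi> (cov_matrix M (cond_cdf_vec y)) - c *\<^sub>R mat 1)"
    using pos_definite_imp_psd_minus_scaled_identity
      gain_matrix_pos_definite[OF bounded_rv_cond_cdf_vec \<pi>_pos sum_\<pi> _ Var_pos] by blast
  have "cov_matrix M (theta_simple Y a y n) - cov_matrix M (theta_tilde X Y a \<gamma> y n) - remainder y n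
          - (c / real n) *\<^sub>R mat 1
      = (1 / real n) *\<^sub>R (gain_matrix \<pi> (cov_matrix M (cond_cdf_vec y)) - c *\<^sub>R mat 1)" for n
    unfolding cov_matrix_theta_diff by (simp add: scaleR_diff_right)
  then show ?thesis
    using \<open>c > 0\<close> c remainder_smallo by (intro exI[of _ c] conjI exI[of _ "remainder y"] allI) (simp_all add: psd_scaleR)
qed

end

theorem theorem4p4:
  fixes M :: "'a measure" and Sx :: "'x measure"
    and X :: "nat \<Rightarrow> 'a \<Rightarrow> 'x" and Y :: "nat \<Rightarrow> 'w::finite \<Rightarrow> 'a \<Rightarrow> real"
    and a :: "nat \<Rightarrow> nat \<Rightarrow> 'w" and \<pi> :: "'w \<Rightarrow> real"
    and \<gamma> :: "'w \<Rightarrow> real \<Rightarrow> 'x \<Rightarrow> real" and y :: real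
  assumes "prob_space M"
    and "\<forall>i. X i \<in> measurable M Sx"
    and "\<forall>i w. Y i w \<in> borel_measurable M"
    and "prob_space.indep_vars M (\<lambda>_. Sx \<Otimes>\<^sub>M (\<Pi>\<^sub>M w\<in>UNIV. borel))
           (\<lambda>i \<omega>. (X i \<omega>, \<lambda>w. Y i w \<omega>)) UNIV"
    and "\<forall>i. distr M (Sx \<Otimes>\<^sub>M (\<Pi>\<^sub>M w\<in>UNIV. borel)) (\<lambda>\<omega>. (X i \<omega>, \<lambda>w. Y i w \<omega>))
           = distr M (Sx \<Otimes>\<^sub>M (\<Pi>\<^sub>M w\<in>UNIV. borel)) (\<lambda>\<omega>. (X 0 \<omega>, \<lambda>w. Y 0 w \<omega>))"
    and "\<forall>w. 0 < \<pi> w \<and> \<pi> w < 1"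
    and "\<forall>w. (\<lambda>n. real (n_arm a n w) / real n) \<longlonglongrightarrow> \<pi> w"
    and "\<forall>i w y'. cond_cdf_version M Sx (X i) (Y i w) y' (\<gamma> w y')"
  shows
    "(\<forall>w. (\<exists>R. R \<in> o(\<lambda>n. 1 / real n) \<and>
              (\<forall>n. Var M (F_tilde X Y a \<gamma> y n w) + R n \<le> Var M (F_simple Y a y n w)))
         \<and> ((\<lambda>n. Var M (F_simple Y a y n w) - Var M (F_tilde X Y a \<gamma> y n w)) \<in> o(\<lambda>n. 1 / real n)
              \<longrightarrow> (AE \<omega> in M. \<gamma> w y (X 0 \<omega>) = measure M {\<omega>'\<in>space M. Y 0 w \<omega>' \<le> y})))
     \<and> (\<exists>R :: nat \<Rightarrow> real ^ 'w ^ 'w.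
           (\<forall>w w'. (\<lambda>n. R n $ w $ w') \<in> o(\<lambda>n. 1 / real n)) \<and>
           (\<forall>n. psd (cov_matrix M (theta_simple Y a y n)
                      - cov_matrix M (theta_tilde X Y a \<gamma> y n) - R n)))
     \<and> ((\<forall>w w' r. w \<noteq> w' \<longrightarrow> Var M (\<lambda>\<omega>. \<gamma> w y (X 0 \<omega>) - r * \<gamma> w' y (X 0 \<omega>)) > 0)
         \<longrightarrow> (\<exists>c > 0. \<exists>R :: nat \<Rightarrow> real ^ 'w ^ 'w.
               (\<forall>w w'. (\<lambda>n. R n $ w $ w') \<in> o(\<lambda>n. 1 / real n)) \<and>
               (\<forall>n. psd (cov_matrix M (theta_simple Y a y n)
                          - cov_matrix M (theta_tilde X Y a \<gamma> y n) - R n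
                          - (c / real n) *\<^sub>R mat 1))))"
proof -
  interpret randomized_experiment M Sx X Y \<gamma> a \<pi>
    unfolding randomized_experiment_def randomized_experiment_axioms_def
      potential_outcomes_sample_def potential_outcomes_sample_axioms_def
    using assms by blast
  show ?thesis
    by (intro conjI allI impI Var_F_tilde_le_Var_F_simple Var_gap_smallo_imp_AE_const
        psd_cov_matrix_theta_diff pos_definite_cov_matrix_theta_diff) auto
qed

end
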